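(* Let $m, n \in \mathbb N$. If $A, B$ are $2n\times 2m$ complex matrices such that $A(H \otimes I_m) = (H \otimes I_n)B$ for all $H \in \mathcal{IH}_2^0$, then $A = B = I_2 \otimes T$ for some $n \times m$ complex matrix $T$.
   Context: $\mathcal{IH}_2^0$ is the set of $2\times 2$ complex matrices that are hermitian, unitary and of trace zero; $\otimes$ is the Kronecker product and $I_n$ the identity matrix. *)

theory Defs
  imports Complex_Main "Jordan_Normal_Form.Matrix"
begin

definition cadj :: "complex mat \<Rightarrow> complex mat" where
  "cadj A = mat (dim_col A) (dim_row A) (\<lambda>(i,j). cnj (A $$ (j,i)))"

definition mtrace :: "complex mat \<Rightarrow> complex" where
  "mtrace A = (\<Sum>i<dim_row A. A $$ (i,i))"

definition kron :: "complex mat \<Rightarrow> complex mat \<Rightarrow> complex mat" where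
  "kron A B = mat (dim_row A * dim_row B) (dim_col A * dim_col B)
     (\<lambda>(i,j). A $$ (i div dim_row B, j div dim_col B) * B $$ (i mod dim_row B, j mod dim_col B))"

definition IH20 :: "complex mat set" where
  "IH20 = {H. H \<in> carrier_mat 2 2 \<and> cadj H = H \<and> cadj H * H = 1\<^sub>m 2
             \<and> H * cadj H = 1\<^sub>m 2 \<and> mtrace H = 0}"

end

theory Submission
  imports Defs
begin

text \<open>View a \<open>2n \<times> 2m\<close> matrix as a \<open>2 \<times> 2\<close> array of \<open>n \<times> m\<close> blocks and, for fixed \<open>(p, q)\<close>,
  collect the \<open>(p, q)\<close>-entries of the four blocks into a \<open>2 \<times> 2\<close> matrix. On these slices,
  right multiplication by \<open>H \<otimes> I\<^sub>m\<close> and left multiplication by \<open>H \<otimes> I\<^sub>n\<close> act as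
  multiplication by \<open>H\<close>, so the hypothesis says that the slices \<open>a\<close>, \<open>b\<close> of \<open>A\<close>, \<open>B\<close> satisfy
  \<open>a H = H b\<close> for all \<open>H \<in> IH\<^sub>2\<^sup>0\<close>. The three Pauli matrices alone force \<open>a = b\<close> to be a
  scalar matrix \<open>t \<cdot> I\<^sub>2\<close>, and this is precisely \<open>A = B = I\<^sub>2 \<otimes> T\<close> with \<open>T\<close> the collection
  of the scalars \<open>t\<close>.\<close>

lemma mult_add_less_mult:
  fixes a k p n :: nat
  assumes "a < k" "p < n"
  shows "a * n + p < k * n"
proof -
  have "a * n + p < Suc a * n" using assms(2) by simp
  also have "\<dots> \<le> k * n" using assms(1) by (intro mult_le_mono1) simp
  finally show ?thesis .
qed

lemma sum_lessThan_mult_blocks: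
  fixes g :: "nat \<Rightarrow> 'a::comm_monoid_add"
  shows "(\<Sum>i<k * m. g i) = (\<Sum>c<k. \<Sum>r<m. g (c * m + r))"
proof -
  have "(\<Sum>i\<in>{c * m..<c * m + m}. g i) = (\<Sum>r<m. g (c * m + r))" for c
    by (simp add: sum.shift_bounds_nat_ivl[of g 0 "c * m" m, simplified] atLeast0LessThan add.commute)
  then show ?thesis
    by (simp flip: sum.nat_group)
qed

lemma index_kron:
  assumes "C \<in> carrier_mat k l" "D \<in> carrier_mat n m"
    and "a < k" "b < l" "p < n" "q < m"
  shows "kron C D $$ (a * n + p, b * m + q) = C $$ (a, b) * D $$ (p, q)"
  using assms mult_add_less_mult[of a k p n] mult_add_less_mult[of b l q m]
  by (simp add: kron_def)

lemma index_kron_one_mat: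
  assumes "H \<in> carrier_mat k l" "a < k" "b < l" "p < n" "q < n"
  shows "kron H (1\<^sub>m n) $$ (a * n + p, b * n + q) = (if p = q then H $$ (a, b) else 0)"
  using assms by (simp add: index_kron)

lemma index_mult_kron_one_right:
  assumes "A \<in> carrier_mat r (k * m)" "H \<in> carrier_mat k l"
    and "i < r" "b < l" "q < m"
  shows "(A * kron H (1\<^sub>m m)) $$ (i, b * m + q) = (\<Sum>c<k. A $$ (i, c * m + q) * H $$ (c, b))"
proof -
  have "(A * kron H (1\<^sub>m m)) $$ (i, b * m + q) = (\<Sum>j<k * m. A $$ (i, j) * kron H (1\<^sub>m m) $$ (j, b * m + q))"
    using assms mult_add_less_mult[of b l q m]
    by (simp add: kron_def scalar_prod_def atLeast0LessThan)
  also have "\<dots> = (\<Sum>c<k. \<Sum>s<m. A $$ (i, c * m + s) * (if s = q then H $$ (c, b) else 0))"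
    using assms by (simp add: sum_lessThan_mult_blocks index_kron_one_mat)
  also have "\<dots> = (\<Sum>c<k. A $$ (i, c * m + q) * H $$ (c, b))"
    using assms(5) by (simp add: if_distrib cong: if_cong)
  finally show ?thesis .
qed

lemma index_kron_one_mult_left:
  assumes "H \<in> carrier_mat k l" "B \<in> carrier_mat (l * n) s"
    and "a < k" "p < n" "j < s"
  shows "(kron H (1\<^sub>m n) * B) $$ (a * n + p, j) = (\<Sum>c<l. H $$ (a, c) * B $$ (c * n + p, j))"
proof -
  have "(kron H (1\<^sub>m n) * B) $$ (a * n + p, j) = (\<Sum>i<l * n. kron H (1\<^sub>m n) $$ (a * n + p, i) * B $$ (i, j))"
    using assms mult_add_less_mult[of a k p n]
    by (simp add: kron_def scalar_prod_def atLeast0LessThan)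
  also have "\<dots> = (\<Sum>c<l. \<Sum>t<n. (if p = t then H $$ (a, c) else 0) * B $$ (c * n + t, j))"
    using assms by (simp add: sum_lessThan_mult_blocks index_kron_one_mat)
  also have "\<dots> = (\<Sum>c<l. H $$ (a, c) * B $$ (c * n + p, j))"
    using assms(4) by (simp add: if_distrib[of "\<lambda>z. z * _"] cong: if_cong)
  finally show ?thesis .
qed

definition block_entry_mat :: "nat \<Rightarrow> nat \<Rightarrow> nat \<Rightarrow> nat \<Rightarrow> 'a mat \<Rightarrow> nat \<Rightarrow> nat \<Rightarrow> 'a mat" where
  "block_entry_mat k l n m M p q = mat k l (\<lambda>(a, b). M $$ (a * n + p, b * m + q))"

lemma block_entry_mat_carrier [simp]: "block_entry_mat k l n m M p q \<in> carrier_mat k l"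
  by (simp add: block_entry_mat_def)

lemma block_entry_mat_mult_kron_one:
  assumes "A \<in> carrier_mat (j * n) (k * m)" "H \<in> carrier_mat k l" "p < n" "q < m"
  shows "block_entry_mat j l n m (A * kron H (1\<^sub>m m)) p q = block_entry_mat j k n m A p q * H"
  using assms mult_add_less_mult[of _ j p n]
  by (intro eq_matI) (auto simp: block_entry_mat_def index_mult_kron_one_right scalar_prod_def atLeast0LessThan)

lemma block_entry_mat_kron_one_mult:
  assumes "H \<in> carrier_mat j k" "B \<in> carrier_mat (k * n) (l * m)" "p < n" "q < m"
  shows "block_entry_mat j l n m (kron H (1\<^sub>m n) * B) p q = H * block_entry_mat k l n m B p q"
  using assms mult_add_less_mult[of _ l q m]
  by (intro eq_matI) (auto simp: block_entry_mat_def index_kron_one_mult_left scalar_prod_def atLeast0LessThan)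

lemma block_entry_mat_intertwine:
  assumes "A \<in> carrier_mat (k * n) (k * m)" "B \<in> carrier_mat (k * n) (k * m)"
    and "H \<in> carrier_mat k k" "A * kron H (1\<^sub>m m) = kron H (1\<^sub>m n) * B"
    and "p < n" "q < m"
  shows "block_entry_mat k k n m A p q * H = H * block_entry_mat k k n m B p q"
proof -
  have "block_entry_mat k k n m A p q * H = block_entry_mat k k n m (A * kron H (1\<^sub>m m)) p q"
    using assms(1,3,5,6) by (simp add: block_entry_mat_mult_kron_one)
  also have "\<dots> = block_entry_mat k k n m (kron H (1\<^sub>m n) * B) p q"
    using assms(4) by simp
  also have "\<dots> = H * block_entry_mat k k n m B p q"
    using assms by (simp add: block_entry_mat_kron_one_mult)
  finally show ?thesis .
qed

lemma block_entry_mat_kron: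
  assumes "C \<in> carrier_mat k l" "T \<in> carrier_mat n m" "p < n" "q < m"
  shows "block_entry_mat k l n m (kron C T) p q = T $$ (p, q) \<cdot>\<^sub>m C"
  using assms by (intro eq_matI) (auto simp: block_entry_mat_def index_kron)

lemma eq_mat_by_block_entry_mat:
  assumes "M \<in> carrier_mat (k * n) (l * m)" "M' \<in> carrier_mat (k * n) (l * m)"
    and "\<And>p q. p < n \<Longrightarrow> q < m \<Longrightarrow> block_entry_mat k l n m M p q = block_entry_mat k l n m M' p q"
  shows "M = M'"
proof (rule eq_matI)
  fix i j assume "i < dim_row M'" "j < dim_col M'"
  then have i: "i < k * n" and j: "j < l * m" using assms(2) by auto
  then have "0 < n" "0 < m"
    by (metis mult_0_right not_less_zero gr0I)+
  with i j have "i div n < k" "j div m < l" "i mod n < n" "j mod m < m"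
    by (auto simp: less_mult_imp_div_less)
  then have "block_entry_mat k l n m M (i mod n) (j mod m) $$ (i div n, j div m)
      = block_entry_mat k l n m M' (i mod n) (j mod m) $$ (i div n, j div m)"
    using assms(3) by simp
  then show "M $$ (i, j) = M' $$ (i, j)"
    using \<open>i div n < k\<close> \<open>j div m < l\<close> by (simp add: block_entry_mat_def)
qed (use assms in auto)

definition pauli_X :: "complex mat" where
  "pauli_X = mat 2 2 (\<lambda>(i, j). if i = j then 0 else 1)"

definition pauli_Y :: "complex mat" where
  "pauli_Y = mat 2 2 (\<lambda>(i, j). if i = j then 0 else if i = 0 then - \<i> else \<i>)"

definition pauli_Z :: "complex mat" where
  "pauli_Z = mat 2 2 (\<lambda>(i, j). if i = j then (if i = 0 then 1 else - 1) else 0)"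

lemma less_2_iff: "(i::nat) < 2 \<longleftrightarrow> i = 0 \<or> i = 1"
  by auto

lemma sum_lessThan_2: "(\<Sum>k<2::nat. f k) = f 0 + f 1"
  by (simp add: numeral_2_eq_2)

lemma pauli_X_IH20: "pauli_X \<in> IH20"
  by (auto simp: IH20_def pauli_X_def cadj_def mtrace_def scalar_prod_def sum_lessThan_2 less_2_iff
      atLeast0LessThan intro!: eq_matI)

lemma pauli_Y_IH20: "pauli_Y \<in> IH20"
  by (auto simp: IH20_def pauli_Y_def cadj_def mtrace_def scalar_prod_def sum_lessThan_2 less_2_iff
      atLeast0LessThan intro!: eq_matI)

lemma pauli_Z_IH20: "pauli_Z \<in> IH20"
  by (auto simp: IH20_def pauli_Z_def cadj_def mtrace_def scalar_prod_def sum_lessThan_2 less_2_iff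
      atLeast0LessThan intro!: eq_matI)

lemma IH20_intertwiner_scalar:
  assumes a: "a \<in> carrier_mat 2 2" and b: "b \<in> carrier_mat 2 2"
    and intertwines: "\<forall>H \<in> IH20. a * H = H * b"
  shows "b = a" and "a = a $$ (0, 0) \<cdot>\<^sub>m 1\<^sub>m 2"
proof -
  have entry: "(a * H) $$ (i, j) = (H * b) $$ (i, j)" if "H \<in> IH20" for H i j
    using intertwines that by simp
  have "a $$ (0, 1) = 0 \<and> a $$ (1, 0) = 0 \<and> a $$ (1, 1) = a $$ (0, 0)
      \<and> b $$ (0, 0) = a $$ (0, 0) \<and> b $$ (0, 1) = 0 \<and> b $$ (1, 0) = 0 \<and> b $$ (1, 1) = a $$ (0, 0)"
    using entry[OF pauli_X_IH20, of 0 0] entry[OF pauli_X_IH20, of 0 1]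
      entry[OF pauli_X_IH20, of 1 0] entry[OF pauli_X_IH20, of 1 1]
      entry[OF pauli_Y_IH20, of 0 0] entry[OF pauli_Z_IH20, of 0 0] entry[OF pauli_Z_IH20, of 0 1]
    using a b by (simp add: pauli_X_def pauli_Y_def pauli_Z_def scalar_prod_def sum_lessThan_2 atLeast0LessThan)
  then show "b = a" and "a = a $$ (0, 0) \<cdot>\<^sub>m 1\<^sub>m 2"
    using a b by (auto simp: less_2_iff intro!: eq_matI)
qed

theorem lemma3p3:
  fixes m n :: nat and A B :: "complex mat"
  assumes "A \<in> carrier_mat (2 * n) (2 * m)"
    and "B \<in> carrier_mat (2 * n) (2 * m)"
    and "\<forall>H \<in> IH20. A * kron H (1\<^sub>m m) = kron H (1\<^sub>m n) * B"
  shows "\<exists>T \<in> carrier_mat n m. A = kron (1\<^sub>m 2) T \<and> B = kron (1\<^sub>m 2) T"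
proof -
  define T where "T = mat n m (\<lambda>(p, q). A $$ (p, q))"
  have T: "T \<in> carrier_mat n m" and K: "kron (1\<^sub>m 2) T \<in> carrier_mat (2 * n) (2 * m)"
    by (simp_all add: T_def kron_def)
  have "block_entry_mat 2 2 n m A p q = block_entry_mat 2 2 n m (kron (1\<^sub>m 2) T) p q
      \<and> block_entry_mat 2 2 n m B p q = block_entry_mat 2 2 n m (kron (1\<^sub>m 2) T) p q"
    if "p < n" "q < m" for p q
  proof -
    have "\<forall>H \<in> IH20. block_entry_mat 2 2 n m A p q * H = H * block_entry_mat 2 2 n m B p q"
      using assms that by (auto simp: IH20_def intro: block_entry_mat_intertwine)
    note scalar = IH20_intertwiner_scalar[OF block_entry_mat_carrier block_entry_mat_carrier this]
    have "block_entry_mat 2 2 n m A p q $$ (0, 0) = T $$ (p, q)"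
      using that by (simp add: block_entry_mat_def T_def)
    then show ?thesis
      using scalar that T by (simp add: block_entry_mat_kron)
  qed
  then have "A = kron (1\<^sub>m 2) T" "B = kron (1\<^sub>m 2) T"
    using assms(1,2) K by (auto intro: eq_mat_by_block_entry_mat)
  then show ?thesis
    using T by blast
qed

end
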